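(* Let $G$ be a finite abstract simplicial complex with connection matrix $L$ and $g=L^{-1}$. Then for every $x\in G$, $$V(x):=\sum_{y\in G}g(x,y)=\omega(x)\,g(x,x)=k(x),$$ where $k(x)=\omega(x)\big(1-\chi(S(x))\big)$.
   Context: A finite abstract simplicial complex $G$ is a finite set of non-empty finite sets closed under taking non-empty subsets; $\omega(x)=(-1)^{|x|-1}$. The connection matrix $L$ has $L(x,y)=1$ if $x\cap y\neq\emptyset$ and $0$ otherwise. The graph $G_1$ has vertex set $G$, with $x\neq y$ adjacent iff one contains the other. $S(x)=\{y\in G: y\subsetneq x\text{ or }x\subsetneq y\}$, and $\chi(S(x))$ is the Euler characteristic of the clique complex of the subgraph of $G_1$ induced on $S(x)$. *)

theory Defs
  imports Complex_Main
begin

definition simplicial_complex :: "'a set set \<Rightarrow> bool" where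
  "simplicial_complex G \<longleftrightarrow> finite G \<and>
     (\<forall>x\<in>G. finite x \<and> x \<noteq> {}) \<and>
     (\<forall>x\<in>G. \<forall>y. y \<subseteq> x \<and> y \<noteq> {} \<longrightarrow> y \<in> G)"

definition omega :: "'a set \<Rightarrow> real" where
  "omega x = (-1) ^ (card x - 1)"

definition connection :: "'a set \<Rightarrow> 'a set \<Rightarrow> real" where
  "connection x y = (if x \<inter> y \<noteq> {} then 1 else 0)"

definition G1_adj :: "'a set \<Rightarrow> 'a set \<Rightarrow> bool" where
  "G1_adj x y \<longleftrightarrow> x \<noteq> y \<and> (x \<subseteq> y \<or> y \<subseteq> x)"

definition unit_sphere :: "'a set set \<Rightarrow> 'a set \<Rightarrow> 'a set set" where
  "unit_sphere G x = {y \<in> G. y \<subset> x \<or> x \<subset> y}"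

definition clique_complex :: "'v set \<Rightarrow> ('v \<Rightarrow> 'v \<Rightarrow> bool) \<Rightarrow> 'v set set" where
  "clique_complex V E = {c. c \<subseteq> V \<and> c \<noteq> {} \<and> finite c \<and>
      (\<forall>a\<in>c. \<forall>b\<in>c. a \<noteq> b \<longrightarrow> E a b)}"

definition euler_char :: "'v set set \<Rightarrow> real" where
  "euler_char K = (\<Sum>c\<in>K. (-1) ^ (card c - 1))"

definition chi_S :: "'a set set \<Rightarrow> 'a set \<Rightarrow> real" where
  "chi_S G x = euler_char (clique_complex (unit_sphere G x) G1_adj)"

end

theory Submission
  imports Defs
begin

(* The inverse of the connection matrix is explicit: g(a,b) = omega(a) omega(b) times the sum of
   omega(z) over the simplices z containing a and b.  L g = 1 because, for each z, the alternating
   count of the nonempty faces of z meeting a is 1 exactly when z is a subset of a; as g is a left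
   inverse of L it equals this right inverse, and its row sums and diagonal are read off directly.

   For the sphere, 1 - chi(S(x)) is the signed count F of chains of S(x), the empty chain included.
   F is multiplicative under joins, and S(x) is the join of the proper faces of x with the proper
   cofaces of x.  Removing the least element of a chain gives F(P) = 1 - sum_p F({q in P. p < q}),
   from which F is omega(x) on the proper faces and omega(x) g(x,x) on the proper cofaces, so that
   1 - chi(S(x)) = g(x,x). *)

lemma sum_sign_interval:
  assumes "finite z" "w \<subset> z"
  shows "(\<Sum>p | w \<subseteq> p \<and> p \<subseteq> z. (-1::real) ^ card p) = 0"
proof (rule sum_alternating_cancels)
  show "finite {p. w \<subseteq> p \<and> p \<subseteq> z}"
    using assms(1) by (auto intro: rev_finite_subset[of "Pow z"])
  show "card {p \<in> {p. w \<subseteq> p \<and> p \<subseteq> z}. even (card p)}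
      = card {p \<in> {p. w \<subseteq> p \<and> p \<subseteq> z}. odd (card p)}"
    using card_subsupersets_even_odd[OF assms] by (simp add: conj_ac)
qed

lemma sum_sign_interval_above:
  assumes "finite z" "w \<subset> z"
  shows "(\<Sum>p | w \<subset> p \<and> p \<subseteq> z. (-1::real) ^ card p) = - ((-1) ^ card w)"
proof -
  have "{p. w \<subset> p \<and> p \<subseteq> z} = {p. w \<subseteq> p \<and> p \<subseteq> z} - {w}" by auto
  moreover have "finite {p. w \<subseteq> p \<and> p \<subseteq> z}"
    using assms(1) by (auto intro: rev_finite_subset[of "Pow z"])
  ultimately show ?thesis
    using assms sum_sign_interval[OF assms] by (simp add: sum_diff1 less_le)
qed

lemma omega_nonempty:
  assumes "finite y" "y \<noteq> {}"
  shows "omega y = - ((-1) ^ card y)"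
proof -
  obtain n where "card y = Suc n" using assms by (metis card_gt_0_iff gr0_implies_Suc)
  then show ?thesis by (simp add: omega_def)
qed

lemma sum_omega_nonempty:
  assumes "\<And>y. y \<in> S \<Longrightarrow> finite y \<and> y \<noteq> {}"
  shows "(\<Sum>y\<in>S. omega y) = - (\<Sum>y\<in>S. (-1) ^ card y)"
  using assms by (simp add: omega_nonempty sum_negf)

lemma omega_squared: "omega x * omega x = 1"
  by (simp add: omega_def flip: power_add)

lemma sum_omega_interval:
  assumes "finite z" "w \<subseteq> z" "w \<noteq> {}"
  shows "(\<Sum>p | w \<subseteq> p \<and> p \<subseteq> z. omega p) = (if w = z then omega z else 0)"
proof (cases "w = z")
  case True
  then have "{p. w \<subseteq> p \<and> p \<subseteq> z} = {z}" by auto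
  then show ?thesis using True by simp
next
  case False
  have "(\<Sum>p | w \<subseteq> p \<and> p \<subseteq> z. omega p) = - (\<Sum>p | w \<subseteq> p \<and> p \<subseteq> z. (-1) ^ card p)"
    using assms by (intro sum_omega_nonempty) (auto dest: finite_subset)
  then show ?thesis using sum_sign_interval[OF assms(1)] assms(2) False by auto
qed

lemma sum_omega_nonempty_subsets:
  assumes "finite z"
  shows "(\<Sum>y | y \<subseteq> z \<and> y \<noteq> {}. omega y) = (if z = {} then 0 else 1)"
proof (cases "z = {}")
  case False
  have "{y. y \<subseteq> z \<and> y \<noteq> {}} = {y. {} \<subset> y \<and> y \<subseteq> z}" by auto
  moreover have "(\<Sum>y | {} \<subset> y \<and> y \<subseteq> z. omega y) = - (\<Sum>y | {} \<subset> y \<and> y \<subseteq> z. (-1) ^ card y)"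
    using assms by (intro sum_omega_nonempty) (auto dest: finite_subset)
  ultimately show ?thesis
    using False assms sum_sign_interval_above[of z "{}"] by auto
qed simp

lemma sum_connection_omega_subsets:
  assumes "finite z" "z \<noteq> {}"
  shows "(\<Sum>y | y \<subseteq> z \<and> y \<noteq> {}. connection a y * omega y) = (if z \<subseteq> a then 1 else 0)"
proof -
  let ?S = "{y. y \<subseteq> z \<and> y \<noteq> {}}"
  have "finite ?S" using assms(1) by simp
  have "(\<Sum>y\<in>?S. connection a y * omega y) = (\<Sum>y\<in>?S. omega y - (if a \<inter> y = {} then omega y else 0))"
    by (rule sum.cong) (auto simp: connection_def)
  also have "\<dots> = (\<Sum>y\<in>?S. omega y) - (\<Sum>y\<in>{y\<in>?S. a \<inter> y = {}}. omega y)"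
    by (simp only: sum_subtractf sum.inter_filter[OF \<open>finite ?S\<close>])
  also have "{y\<in>?S. a \<inter> y = {}} = {y. y \<subseteq> z - a \<and> y \<noteq> {}}" by auto
  finally show ?thesis
    using assms by (simp add: sum_omega_nonempty_subsets)
qed

lemma left_inverse_eq_right_inverse:
  fixes M g h :: "'i \<Rightarrow> 'i \<Rightarrow> 'r::comm_semiring_1"
  assumes "finite I"
    and left: "\<And>x z. x \<in> I \<Longrightarrow> z \<in> I \<Longrightarrow> (\<Sum>y\<in>I. g x y * M y z) = (if x = z then 1 else 0)"
    and right: "\<And>x z. x \<in> I \<Longrightarrow> z \<in> I \<Longrightarrow> (\<Sum>y\<in>I. M x y * h y z) = (if x = z then 1 else 0)"
    and "x \<in> I" "z \<in> I"
  shows "g x z = h x z"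
proof -
  have "g x z = (\<Sum>y\<in>I. if y = z then g x y else 0)"
    using assms(1,5) by simp
  also have "\<dots> = (\<Sum>y\<in>I. g x y * (\<Sum>w\<in>I. M y w * h w z))"
    by (rule sum.cong[OF refl]) (simp add: right \<open>z \<in> I\<close>)
  also have "\<dots> = (\<Sum>y\<in>I. \<Sum>w\<in>I. g x y * M y w * h w z)"
    by (simp add: sum_distrib_left mult.assoc)
  also have "\<dots> = (\<Sum>w\<in>I. \<Sum>y\<in>I. g x y * M y w * h w z)"
    by (rule sum.swap)
  also have "\<dots> = (\<Sum>w\<in>I. (\<Sum>y\<in>I. g x y * M y w) * h w z)"
    by (simp add: sum_distrib_right)
  also have "\<dots> = (\<Sum>w\<in>I. if x = w then h w z else 0)"
    by (rule sum.cong[OF refl]) (simp add: left \<open>x \<in> I\<close>)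
  also have "\<dots> = h x z"
    using assms(1,4) by simp
  finally show ?thesis .
qed

(* The empty chain counts as well; this is what makes chain_sign multiplicative under joins. *)
definition chain_sign :: "'a set set \<Rightarrow> real" where
  "chain_sign P = (\<Sum>c\<in>chains P. (-1) ^ card c)"

lemma finite_chains: "finite P \<Longrightarrow> finite (chains P)"
  by (rule finite_subset[of _ "Pow P"]) (auto simp: chains_def)

lemma finite_chain_of_finite: "finite P \<Longrightarrow> c \<in> chains P \<Longrightarrow> finite c"
  by (auto simp: chains_def intro: finite_subset)

lemma euler_char_comparability_complex:
  assumes "finite P"
  shows "euler_char (clique_complex P G1_adj) = 1 - chain_sign P"
proof -
  have "clique_complex P G1_adj = chains P - {{}}"
    using assms by (auto simp: clique_complex_def chains_def chain_subset_def G1_adj_def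
        intro: finite_subset)
  then have "euler_char (clique_complex P G1_adj) = (\<Sum>c\<in>chains P - {{}}. omega c)"
    by (simp add: euler_char_def omega_def)
  also have "\<dots> = - (\<Sum>c\<in>chains P - {{}}. (-1) ^ card c)"
    using assms by (intro sum_omega_nonempty) (auto intro: finite_chain_of_finite)
  finally show ?thesis
    using assms by (simp add: chain_sign_def finite_chains sum_diff1 chains_def chain_subset_def)
qed

lemma chains_subset: "c \<in> chains A \<Longrightarrow> c \<subseteq> A"
  by (simp add: chains_def)

lemma chains_join:
  assumes "c \<in> chains A" "d \<in> chains B" "\<forall>a\<in>A. \<forall>b\<in>B. a \<subseteq> b"
  shows "c \<union> d \<in> chains (A \<union> B)"
proof -
  have "c \<subseteq> A" "d \<subseteq> B" "chain\<^sub>\<subseteq> c" "chain\<^sub>\<subseteq> d"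
    using assms(1,2) by (auto simp: chains_def)
  then have "a \<subseteq> b \<or> b \<subseteq> a" if "a \<in> c \<union> d" "b \<in> c \<union> d" for a b
    using that assms(3) unfolding chain_subset_def by (elim UnE) blast+
  then show ?thesis
    using \<open>c \<subseteq> A\<close> \<open>d \<subseteq> B\<close> by (auto simp: chains_def chain_subset_def)
qed

lemma chain_sign_join:
  assumes "finite A" "finite B" "A \<inter> B = {}" "\<forall>a\<in>A. \<forall>b\<in>B. a \<subseteq> b"
  shows "chain_sign (A \<union> B) = chain_sign A * chain_sign B"
proof -
  have restrict: "c \<inter> A \<in> chains A" "c \<inter> B \<in> chains B" if "c \<in> chains (A \<union> B)" for c
    using that unfolding chains_def chain_subset_def by blast+
  have sign: "(-1) ^ card (c \<union> d) = (-1::real) ^ card c * (-1) ^ card d"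
    if "c \<in> chains A" "d \<in> chains B" for c d
  proof -
    have "finite c" "finite d" "c \<inter> d = {}"
      using that assms(1-3) by (auto simp: chains_def dest: finite_subset)
    then show ?thesis by (simp add: card_Un_disjoint power_add)
  qed
  have "chain_sign A * chain_sign B = (\<Sum>(c, d)\<in>chains A \<times> chains B. (-1) ^ card c * (-1) ^ card d)"
    by (simp add: chain_sign_def sum_product sum.cartesian_product)
  also have "\<dots> = chain_sign (A \<union> B)"
    unfolding chain_sign_def using assms(3)
    by (intro sum.reindex_bij_witness[where i = "\<lambda>c. (c \<inter> A, c \<inter> B)" and j = "\<lambda>(c, d). c \<union> d"])
      (auto simp: chains_join[OF _ _ assms(4)] restrict sign dest: chains_subset)
  finally show ?thesis ..
qed

lemma chain_sign_least_decomp: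
  assumes "finite P"
  shows "chain_sign P = 1 - (\<Sum>p\<in>P. chain_sign {q\<in>P. p \<subset> q})"
proof -
  let ?above = "\<lambda>p. chains {q\<in>P. p \<subset> q}"
  have least: "\<Inter>c \<in> c" "\<Inter>c \<in> P" "c - {\<Inter>c} \<in> ?above (\<Inter>c)"
    if "c \<in> chains P - {{}}" for c
  proof -
    show "\<Inter>c \<in> c"
      using that assms
      by (intro Inter_in_chain) (auto simp: chains_alt_def dest: finite_chain_of_finite)
    then show "\<Inter>c \<in> P" "c - {\<Inter>c} \<in> ?above (\<Inter>c)"
      using that by (auto simp: chains_def chain_subset_def)
  qed
  have extend: "insert p d \<in> chains P" "\<Inter>(insert p d) = p" "p \<notin> d"
    if "p \<in> P" "d \<in> ?above p" for p d
    using that by (auto simp: chains_def chain_subset_def)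
  have "(\<Sum>(p, d)\<in>Sigma P ?above. (-1) ^ card (insert p d))
      = (\<Sum>c\<in>chains P - {{}}. (-1::real) ^ card c)"
    by (rule sum.reindex_bij_witness[where j = "\<lambda>(p, d). insert p d" and i = "\<lambda>c. (\<Inter>c, c - {\<Inter>c})"])
      (auto simp: least extend insert_absorb dest: chains_subset)
  moreover have "(\<Sum>(p, d)\<in>Sigma P ?above. (-1) ^ card (insert p d))
      = (\<Sum>p\<in>P. \<Sum>d\<in>?above p. (-1::real) ^ card (insert p d))"
    using assms by (simp add: sum.Sigma finite_chains)
  moreover have "(\<Sum>d\<in>?above p. (-1::real) ^ card (insert p d)) = - chain_sign {q\<in>P. p \<subset> q}" for p
    unfolding chain_sign_def sum_negf[symmetric]
  proof (rule sum.cong[OF refl])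
    fix d assume "d \<in> ?above p"
    then have "finite d" "p \<notin> d"
      using assms by (auto simp: chains_def dest: finite_subset)
    then show "(-1) ^ card (insert p d) = - ((-1::real) ^ card d)" by simp
  qed
  ultimately have "(\<Sum>c\<in>chains P - {{}}. (-1) ^ card c) = - (\<Sum>p\<in>P. chain_sign {q\<in>P. p \<subset> q})"
    by (simp add: sum_negf)
  then show ?thesis
    using assms
    by (simp add: chain_sign_def finite_chains sum_diff1 sum_negf chains_def chain_subset_def)
qed

(* Convexity of K is what the recursion needs; it holds for a simplicial complex and also for the
   proper subsets of a simplex (with w = {}), which gives its boundary sphere. *)
lemma chain_sign_strictly_above:
  assumes "finite K" "\<forall>z\<in>K. finite z" "w \<in> K"
    and convex: "\<And>y z q. y \<in> K \<Longrightarrow> z \<in> K \<Longrightarrow> y \<subseteq> q \<Longrightarrow> q \<subseteq> z \<Longrightarrow> q \<in> K"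
  shows "chain_sign {z\<in>K. w \<subset> z} = (-1) ^ card w * (\<Sum>z\<in>{z\<in>K. w \<subseteq> z}. (-1) ^ card z)"
  using assms(3)
proof (induction "card {z\<in>K. w \<subset> z}" arbitrary: w rule: less_induct)
  case less
  let ?U = "{z\<in>K. w \<subset> z}"
  have fU: "finite ?U" using assms(1) by simp
  have IH: "chain_sign {q\<in>?U. p \<subset> q} = (\<Sum>z\<in>{z\<in>?U. p \<subseteq> z}. (-1) ^ card p * (-1) ^ card z)"
    if "p \<in> ?U" for p
  proof -
    have "card {q\<in>K. p \<subset> q} < card ?U"
      by (rule psubset_card_mono[OF fU]) (use that in auto)
    then have "chain_sign {q\<in>K. p \<subset> q} = (-1) ^ card p * (\<Sum>z\<in>{z\<in>K. p \<subseteq> z}. (-1) ^ card z)"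
      using less.hyps that by blast
    moreover have "{q\<in>?U. p \<subset> q} = {q\<in>K. p \<subset> q}" "{z\<in>?U. p \<subseteq> z} = {z\<in>K. p \<subseteq> z}"
      using that by auto
    ultimately show ?thesis by (simp only: sum_distrib_left)
  qed
  have interval: "(\<Sum>p\<in>{p\<in>?U. p \<subseteq> z}. (-1) ^ card p) = - ((-1::real) ^ card w)" if "z \<in> ?U" for z
  proof -
    have "{p\<in>?U. p \<subseteq> z} = {p. w \<subset> p \<and> p \<subseteq> z}"
      using that convex less.prems by blast
    then show ?thesis
      using that assms(2) by (simp add: sum_sign_interval_above)
  qed
  have "chain_sign ?U = 1 - (\<Sum>p\<in>?U. chain_sign {q\<in>?U. p \<subset> q})"
    by (rule chain_sign_least_decomp[OF fU])
  also have "\<dots> = 1 - (\<Sum>p\<in>?U. \<Sum>z\<in>{z\<in>?U. p \<subseteq> z}. (-1) ^ card p * (-1) ^ card z)"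
    by (rule arg_cong[where f = "(-) 1"], rule sum.cong[OF refl], rule IH)
  also have "\<dots> = 1 - (\<Sum>z\<in>?U. (\<Sum>p\<in>{p\<in>?U. p \<subseteq> z}. (-1) ^ card p) * (-1) ^ card z)"
    by (subst sum.swap_restrict[OF fU fU]) (simp only: sum_distrib_right)
  also have "\<dots> = 1 - (\<Sum>z\<in>?U. - ((-1) ^ card w) * (-1) ^ card z)"
    by (rule arg_cong[where f = "(-) 1"], rule sum.cong[OF refl]) (simp only: interval)
  also have "\<dots> = 1 + (-1) ^ card w * (\<Sum>z\<in>?U. (-1) ^ card z)"
    by (simp add: sum_distrib_left sum_negf)
  also have "\<dots> = (-1) ^ card w * (\<Sum>z\<in>{z\<in>K. w \<subseteq> z}. (-1) ^ card z)"
  proof -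
    have "{z\<in>K. w \<subseteq> z} = insert w ?U" using less.prems by auto
    then show ?thesis using fU by (simp add: distrib_left flip: mult.assoc power_add)
  qed
  finally show ?case .
qed

lemma chain_sign_proper_subsets:
  assumes "finite x" "x \<noteq> {}"
  shows "chain_sign {y. y \<noteq> {} \<and> y \<subset> x} = omega x"
proof -
  have "chain_sign {y. y \<noteq> {} \<and> y \<subset> x} = chain_sign {y\<in>{y. y \<subset> x}. {} \<subset> y}"
    by (rule arg_cong[where f = chain_sign]) blast
  also have "\<dots> = (\<Sum>y\<in>{y. y \<subset> x}. (-1) ^ card y)"
    using assms by (subst chain_sign_strictly_above) (auto intro: finite_subset)
  also have "\<dots> = (\<Sum>y | {} \<subseteq> y \<and> y \<subseteq> x. (-1) ^ card y) - (-1) ^ card x"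
  proof -
    have "{y. y \<subset> x} = {y. {} \<subseteq> y \<and> y \<subseteq> x} - {x}" by auto
    moreover have "finite {y. {} \<subseteq> y \<and> y \<subseteq> x}" using assms(1) by simp
    ultimately show ?thesis by (simp add: sum_diff1)
  qed
  also have "\<dots> = omega x"
    using assms sum_sign_interval[of x "{}"] by (simp add: omega_nonempty less_le)
  finally show ?thesis .
qed

definition star_omega :: "'a set set \<Rightarrow> 'a set \<Rightarrow> real" where
  "star_omega G t = (\<Sum>z\<in>{z\<in>G. t \<subseteq> z}. omega z)"

(* The paper's formula g(a,b) = omega(a) omega(b) chi(St(a) inter St(b)). *)
definition green :: "'a set set \<Rightarrow> 'a set \<Rightarrow> 'a set \<Rightarrow> real" where
  "green G a b = omega a * omega b * star_omega G (a \<union> b)"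

lemma green_diag: "green G x x = star_omega G x"
  by (simp add: green_def omega_squared)

context
  fixes G :: "'a set set"
  assumes complex: "simplicial_complex G"
begin

lemma finite_complex: "finite G"
  using complex unfolding simplicial_complex_def by blast

lemma face_finite: "x \<in> G \<Longrightarrow> finite x"
  and face_nonempty: "x \<in> G \<Longrightarrow> x \<noteq> {}"
  using complex unfolding simplicial_complex_def by blast+

lemma subface_in_complex: "z \<in> G \<Longrightarrow> y \<subseteq> z \<Longrightarrow> y \<noteq> {} \<Longrightarrow> y \<in> G"
  using complex unfolding simplicial_complex_def by blast

lemma sum_faces_cofaces_swap:
  "(\<Sum>y\<in>G. \<Sum>z\<in>{z\<in>G. y \<union> b \<subseteq> z}. F y z) = (\<Sum>z\<in>{z\<in>G. b \<subseteq> z}. \<Sum>y | y \<subseteq> z \<and> y \<noteq> {}. F y z)"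
proof -
  have "(\<Sum>y\<in>G. \<Sum>z\<in>{z\<in>G. y \<union> b \<subseteq> z}. F y z) = (\<Sum>z\<in>G. \<Sum>y\<in>{y\<in>G. y \<union> b \<subseteq> z}. F y z)"
    by (rule sum.swap_restrict[OF finite_complex finite_complex])
  also have "\<dots> = (\<Sum>z\<in>G. if b \<subseteq> z then (\<Sum>y | y \<subseteq> z \<and> y \<noteq> {}. F y z) else 0)"
  proof (rule sum.cong[OF refl])
    fix z assume "z \<in> G"
    then have "{y\<in>G. y \<union> b \<subseteq> z} = {y. y \<subseteq> z \<and> y \<noteq> {}}" if "b \<subseteq> z"
      using that subface_in_complex face_nonempty by blast
    then show "(\<Sum>y\<in>{y\<in>G. y \<union> b \<subseteq> z}. F y z) = (if b \<subseteq> z then (\<Sum>y | y \<subseteq> z \<and> y \<noteq> {}. F y z) else 0)"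
      by (cases "b \<subseteq> z") auto
  qed
  also have "\<dots> = (\<Sum>z\<in>{z\<in>G. b \<subseteq> z}. \<Sum>y | y \<subseteq> z \<and> y \<noteq> {}. F y z)"
    by (simp add: sum.inter_filter finite_complex)
  finally show ?thesis .
qed

lemma chain_sign_cofaces:
  assumes "x \<in> G"
  shows "chain_sign {z\<in>G. x \<subset> z} = omega x * star_omega G x"
proof -
  have "chain_sign {z\<in>G. x \<subset> z} = (-1) ^ card x * (\<Sum>z\<in>{z\<in>G. x \<subseteq> z}. (-1) ^ card z)"
  proof (rule chain_sign_strictly_above[OF finite_complex _ assms])
    show "\<forall>z\<in>G. finite z" using face_finite by blast
    show "q \<in> G" if "y \<in> G" "z \<in> G" "y \<subseteq> q" "q \<subseteq> z" for y z q
      using that face_nonempty subface_in_complex by blast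
  qed
  also have "\<dots> = omega x * star_omega G x"
    using assms unfolding star_omega_def
    by (subst sum_omega_nonempty) (auto simp: omega_nonempty face_finite face_nonempty)
  finally show ?thesis .
qed

lemma chain_sign_unit_sphere:
  assumes "x \<in> G"
  shows "chain_sign (unit_sphere G x) = star_omega G x"
proof -
  have fx: "finite x" "x \<noteq> {}" using assms face_finite face_nonempty by auto
  have "unit_sphere G x = {y. y \<noteq> {} \<and> y \<subset> x} \<union> {z\<in>G. x \<subset> z}"
    using assms face_nonempty subface_in_complex unfolding unit_sphere_def by blast
  also have "chain_sign \<dots> = chain_sign {y. y \<noteq> {} \<and> y \<subset> x} * chain_sign {z\<in>G. x \<subset> z}"
    using fx(1) finite_complex
    by (intro chain_sign_join) (auto intro: rev_finite_subset[of "Pow x"])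
  also have "\<dots> = star_omega G x"
    using assms fx by (simp add: chain_sign_proper_subsets chain_sign_cofaces omega_squared
        flip: mult.assoc)
  finally show ?thesis .
qed

lemma one_minus_chi_S: "x \<in> G \<Longrightarrow> 1 - chi_S G x = star_omega G x"
  using finite_complex
  by (simp add: chi_S_def unit_sphere_def euler_char_comparability_complex
      flip: chain_sign_unit_sphere)

lemma connection_green:
  assumes "a \<in> G" "b \<in> G"
  shows "(\<Sum>y\<in>G. connection a y * green G y b) = (if a = b then 1 else 0)"
proof -
  have "(\<Sum>y\<in>G. connection a y * green G y b)
      = (\<Sum>y\<in>G. \<Sum>z\<in>{z\<in>G. y \<union> b \<subseteq> z}. connection a y * omega y * (omega b * omega z))"
    by (simp add: green_def star_omega_def sum_distrib_left mult_ac)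
  also have "\<dots> = (\<Sum>z\<in>{z\<in>G. b \<subseteq> z}.
      (\<Sum>y | y \<subseteq> z \<and> y \<noteq> {}. connection a y * omega y) * (omega b * omega z))"
    by (simp only: sum_faces_cofaces_swap sum_distrib_right)
  also have "\<dots> = (\<Sum>z\<in>{z\<in>G. b \<subseteq> z}. if z \<subseteq> a then omega b * omega z else 0)"
    by (rule sum.cong[OF refl]) (simp add: sum_connection_omega_subsets face_finite face_nonempty)
  also have "\<dots> = (\<Sum>z\<in>{z\<in>{z\<in>G. b \<subseteq> z}. z \<subseteq> a}. omega b * omega z)"
    by (rule sum.inter_filter[symmetric]) (simp add: finite_complex)
  also have "\<dots> = omega b * (\<Sum>z\<in>{z\<in>G. b \<subseteq> z \<and> z \<subseteq> a}. omega z)"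
    by (simp add: sum_distrib_left conj_assoc)
  also have "\<dots> = (if a = b then 1 else 0)"
  proof (cases "b \<subseteq> a")
    case True
    then have "{z\<in>G. b \<subseteq> z \<and> z \<subseteq> a} = {z. b \<subseteq> z \<and> z \<subseteq> a}"
      using assms face_nonempty subface_in_complex by blast
    then show ?thesis
      using True assms sum_omega_interval[of a b]
      by (auto simp: face_finite face_nonempty omega_squared)
  next
    case False
    then have empty: "{z\<in>G. b \<subseteq> z \<and> z \<subseteq> a} = {}" and "a \<noteq> b" by blast+
    then show ?thesis unfolding empty by simp
  qed
  finally show ?thesis .
qed

lemma sum_green_row:
  assumes "x \<in> G"
  shows "(\<Sum>y\<in>G. green G x y) = omega x * star_omega G x"
proof -
  have "(\<Sum>y\<in>G. green G x y) = (\<Sum>y\<in>G. \<Sum>z\<in>{z\<in>G. y \<union> x \<subseteq> z}. omega y * (omega x * omega z))"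
    by (simp add: green_def star_omega_def sum_distrib_left mult_ac Un_commute)
  also have "\<dots> = (\<Sum>z\<in>{z\<in>G. x \<subseteq> z}. (\<Sum>y | y \<subseteq> z \<and> y \<noteq> {}. omega y) * (omega x * omega z))"
    by (simp only: sum_faces_cofaces_swap sum_distrib_right)
  also have "\<dots> = omega x * star_omega G x"
    unfolding star_omega_def sum_distrib_left
    by (rule sum.cong[OF refl]) (simp add: sum_omega_nonempty_subsets face_finite face_nonempty)
  finally show ?thesis .
qed

end

theorem mainTheorem14:
  fixes G :: "'a set set" and g :: "'a set \<Rightarrow> 'a set \<Rightarrow> real"
  assumes "simplicial_complex G"
    and "\<forall>x\<in>G. \<forall>z\<in>G. (\<Sum>y\<in>G. connection x y * g y z) = (if x = z then 1 else 0)"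
    and "\<forall>x\<in>G. \<forall>z\<in>G. (\<Sum>y\<in>G. g x y * connection y z) = (if x = z then 1 else 0)"
    and "x \<in> G"
  shows "(\<Sum>y\<in>G. g x y) = omega x * g x x \<and>
         omega x * g x x = omega x * (1 - chi_S G x)"
proof -
  have g_green: "g x y = green G x y" if "y \<in> G" for y
    using left_inverse_eq_right_inverse[of G g connection "green G", OF finite_complex[OF assms(1)]]
      assms(1,3,4) that connection_green by blast
  then have "(\<Sum>y\<in>G. g x y) = (\<Sum>y\<in>G. green G x y)" by simp
  then show ?thesis
    using g_green[OF assms(4)] sum_green_row[OF assms(1,4)] one_minus_chi_S[OF assms(1,4)]
    by (simp add: green_diag)
qed

end
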